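(* Let $a>0$, $0<\alpha<1$, and let $\gamma_1<\dots<\gamma_J$ and $c_1,\dots,c_J$ be as in the context. Let $0<h\le a$ and let $l$ be a positive integer with $l\alpha\le1<(l+1)\alpha$. For any $g\in\mathcal C^{0,l\alpha}[0,h]$ define $w(x):=\sum_{j=1}^J\gamma_jc_jx^{\gamma_j-1}g(x)$ for $0<x\le h$ and $w(0):=0$. Then $w\in\mathcal C^{0,(l+1)\alpha-1}[0,h]$ and \[ \|w\|_{C^{0,(l+1)\alpha-1}[0,h]}\le C\|g\|_{C^{0,l\alpha}[0,h]}, \] where $C$ is a positive constant depending only on $\alpha$, $a$ and $M$.
   Context: Setting: $a>0$, $b>0$, $0<\alpha<1$, $c_0\in\mathbb R$, $n$ a positive integer, $M>0$, $f\in C^n([0,a]\times[c_0-b,c_0+b])$ with all partial derivatives $\partial_x^i\partial_y^jf$, $i+j\le n$, bounded in absolute value by $M$. $\mathbb N=\{0,1,\dots\}$, $m:=\max\{j\in\mathbb N:j<n\alpha\}$; $\gamma_1<\dots<\gamma_J$ enumerate $\{i+j\alpha:i,j\in\mathbb N,\ 0<i+j\alpha<m\}$. $\Lambda_s=\{1,2\}^s$, $\Lambda_0=\{\emptyset\}$, and for $\beta\in\Lambda_s$, $\partial_\beta f:=\partial_{x_{\beta_s}}\cdots\partial_{x_{\beta_1}}f$ with $(x_1,x_2)=(x,y)$, $\partial_\emptyset f=f$. With $\varphi_1\equiv1$, $\varphi_2(t)=\sum_{j=1}^J\gamma_jc_jt^{\gamma_j-1}$, $S(x)=c_0+\sum_jc_jx^{\gamma_j}$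 and $Q(x)=\sum_{s=0}^{n-1}\sum_{\beta\in\Lambda_s}\frac{\partial_\beta f(0,c_0)}{\Gamma(\alpha)}\int_0^x(x-t_0)^{\alpha-1}\int_0^{t_0}\varphi_{\beta_1}(t_1)\cdots\int_0^{t_{s-1}}\varphi_{\beta_s}(t_s)\,dt_s\cdots dt_1\,dt_0$, the reals $c_1,\dots,c_J$ are the unique ones for which $Q-S+c_0$ lies in the span of $\{x^{i+j\alpha}:i,j\in\mathbb N,\ i+j\alpha\ge m\}$. Function spaces: $|v|_{C^{k,\gamma}[0,h]}=\sup_{0\le x<y\le h}|v^{(k)}(x)-v^{(k)}(y)|/(y-x)^\gamma$; $C^{k,\gamma}[0,h]$ = $C^k$ functions with finite seminorm, norm $\max\{\max_{j\le k}\|v^{(j)}\|_\infty,|v|_{C^{k,\gamma}}\}$; $\mathcal C^{k,\gamma}[0,h]$ = those $v$ with $v^{(j)}(0)=0$ for $j=0,\dots,k$. *)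

theory Defs
  imports "HOL-Analysis.Analysis"
begin

definition mA :: "nat \<Rightarrow> real \<Rightarrow> nat" where
  "mA n \<alpha> = (GREATEST j::nat. real j < real n * \<alpha>)"

definition Gams :: "nat \<Rightarrow> real \<Rightarrow> real set" where
  "Gams n \<alpha> = {\<gamma>. \<exists>i j::nat. \<gamma> = real i + real j * \<alpha> \<and> 0 < \<gamma> \<and> \<gamma> < real (mA n \<alpha>)}"

definition phi :: "nat \<Rightarrow> real \<Rightarrow> (real \<Rightarrow> real) \<Rightarrow> nat \<Rightarrow> real \<Rightarrow> real" where
  "phi n \<alpha> c k t = (if k = 1 then 1 else (\<Sum>\<gamma>\<in>Gams n \<alpha>. \<gamma> * c \<gamma> * t powr (\<gamma> - 1)))"

fun iterint :: "(nat \<Rightarrow> real \<Rightarrow> real) \<Rightarrow> nat list \<Rightarrow> real \<Rightarrow> real" where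
  "iterint \<phi> [] t = 1"
| "iterint \<phi> (k # \<beta>) t = integral {0..t} (\<lambda>u. \<phi> k u * iterint \<phi> \<beta> u)"

definition Lam :: "nat \<Rightarrow> nat list set" where
  "Lam s = {\<beta>. length \<beta> = s \<and> set \<beta> \<subseteq> {1,2}}"

text \<open>D beta = partial_beta f, where beta = [beta_1,...,beta_s] and beta_1 is applied first\<close>
definition QA :: "nat \<Rightarrow> real \<Rightarrow> real \<Rightarrow> (nat list \<Rightarrow> real \<times> real \<Rightarrow> real) \<Rightarrow> (real \<Rightarrow> real) \<Rightarrow> real \<Rightarrow> real" where
  "QA n \<alpha> c0 D c x = (\<Sum>s<n. \<Sum>\<beta>\<in>Lam s. D \<beta> (0, c0) / Gamma \<alpha> *
      integral {0..x} (\<lambda>t0. (x - t0) powr (\<alpha> - 1) * iterint (phi n \<alpha> c) \<beta> t0))"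

definition SA :: "nat \<Rightarrow> real \<Rightarrow> real \<Rightarrow> (real \<Rightarrow> real) \<Rightarrow> real \<Rightarrow> real" where
  "SA n \<alpha> c0 c x = c0 + (\<Sum>\<gamma>\<in>Gams n \<alpha>. c \<gamma> * x powr \<gamma>)"

definition coeffs_cond :: "nat \<Rightarrow> real \<Rightarrow> real \<Rightarrow> real \<Rightarrow> (nat list \<Rightarrow> real \<times> real \<Rightarrow> real) \<Rightarrow> (real \<Rightarrow> real) \<Rightarrow> bool" where
  "coeffs_cond n \<alpha> a c0 D c \<longleftrightarrow>
     (\<exists>F d. finite F \<and> F \<subseteq> {p. \<exists>i j::nat. p = real i + real j * \<alpha> \<and> real (mA n \<alpha>) \<le> p} \<and>
        (\<forall>x\<in>{0<..a}. QA n \<alpha> c0 D c x - SA n \<alpha> c0 c x + c0 = (\<Sum>p\<in>F. d p * x powr p)))"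

definition Cn_partials :: "nat \<Rightarrow> real \<Rightarrow> real \<Rightarrow> real \<Rightarrow> (real \<times> real \<Rightarrow> real) \<Rightarrow> (nat list \<Rightarrow> real \<times> real \<Rightarrow> real) \<Rightarrow> bool" where
  "Cn_partials n a b c0 f D \<longleftrightarrow>
     (\<forall>z\<in>{0..a} \<times> {c0-b..c0+b}. D [] z = f z) \<and>
     (\<forall>\<beta>. set \<beta> \<subseteq> {1,2} \<and> length \<beta> \<le> n \<longrightarrow> continuous_on ({0..a} \<times> {c0-b..c0+b}) (D \<beta>)) \<and>
     (\<forall>\<beta>. set \<beta> \<subseteq> {1,2} \<and> length \<beta> < n \<longrightarrow>
        (\<forall>x\<in>{0..a}. \<forall>y\<in>{c0-b..c0+b}.
           ((\<lambda>t. D \<beta> (t, y)) has_real_derivative D (\<beta> @ [1]) (x, y)) (at x within {0..a}) \<and>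
           ((\<lambda>t. D \<beta> (x, t)) has_real_derivative D (\<beta> @ [2]) (x, y)) (at y within {c0-b..c0+b})))"

definition holder_quots :: "real \<Rightarrow> real \<Rightarrow> (real \<Rightarrow> real) \<Rightarrow> real set" where
  "holder_quots \<gamma> h v = (\<lambda>p. \<bar>v (fst p) - v (snd p)\<bar> / (snd p - fst p) powr \<gamma>) `
      {p. 0 \<le> fst p \<and> fst p < snd p \<and> snd p \<le> h}"

definition holder_semi0 :: "real \<Rightarrow> real \<Rightarrow> (real \<Rightarrow> real) \<Rightarrow> real" where
  "holder_semi0 \<gamma> h v = Sup (holder_quots \<gamma> h v)"

definition C0hol :: "real \<Rightarrow> real \<Rightarrow> (real \<Rightarrow> real) set" where
  "C0hol \<gamma> h = {v. continuous_on {0..h} v \<and> bdd_above (holder_quots \<gamma> h v)}"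

definition C0hol_van :: "real \<Rightarrow> real \<Rightarrow> (real \<Rightarrow> real) set" where
  "C0hol_van \<gamma> h = {v \<in> C0hol \<gamma> h. v 0 = 0}"

definition norm0hol :: "real \<Rightarrow> real \<Rightarrow> (real \<Rightarrow> real) \<Rightarrow> real" where
  "norm0hol \<gamma> h v = max (SUP x\<in>{0..h}. \<bar>v x\<bar>) (holder_semi0 \<gamma> h v)"

end

(*
  The coefficients c_gamma are fixed recursively by the expansion condition. For t > 0 every
  iterated integral occurring in QA is a finite sum of real powers of t. Splitting phi_2 into the
  terms with exponent below gamma and the rest shows that the coefficient of x powr gamma in QA
  involves only the values of D at (0, c0) and the c_g with g < gamma, and by uniqueness of such
  power expansions on (0, a] it equals c_gamma. Induction along the finitely many exponents then
  bounds every |c_gamma| in terms of n, alpha and M.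

  The Hoelder estimate reduces to a single term x powr e * g x with e = gamma - 1 > -1 and
  g 0 = 0, so that |g t| <= G * t powr (l * alpha). For y > 2x both values are bounded by a
  multiple of G * (y - x) powr (e + l * alpha); for y <= 2x one writes the difference as
  y powr e * (g y - g x) + (y powr e - x powr e) * g x and applies the mean value theorem to
  t powr e.
*)

theory Submission
  imports Defs
begin

section \<open>Finite sums of real powers\<close>

\<comment> \<open>a pair (c, e) stands for the term c * t powr e\<close>
type_synonym gpoly = "(real \<times> real) list"

definition gpoly_eval :: "gpoly \<Rightarrow> real \<Rightarrow> real" where
  "gpoly_eval xs t = (\<Sum>z\<leftarrow>xs. fst z * t powr snd z)"

definition gpoly_coeff :: "gpoly \<Rightarrow> real \<Rightarrow> real" where
  "gpoly_coeff xs q = (\<Sum>z\<leftarrow>xs. if snd z = q then fst z else 0)"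

definition gpoly_norm :: "gpoly \<Rightarrow> real" where
  "gpoly_norm xs = (\<Sum>z\<leftarrow>xs. \<bar>fst z\<bar>)"

definition gpoly_mult :: "gpoly \<Rightarrow> gpoly \<Rightarrow> gpoly" where
  "gpoly_mult xs ys = concat (map (\<lambda>z. map (\<lambda>w. (fst z * fst w, snd z + snd w)) ys) xs)"

definition gpoly_integral :: "gpoly \<Rightarrow> gpoly" where
  "gpoly_integral xs = map (\<lambda>z. (fst z / (snd z + 1), snd z + 1)) xs"

\<comment> \<open>Riemann-Liouville integral, without the factor 1 / Gamma alpha (cf. QA)\<close>
definition gpoly_RL_integral :: "real \<Rightarrow> gpoly \<Rightarrow> gpoly" where
  "gpoly_RL_integral \<alpha> xs = map (\<lambda>z. (fst z * Beta (snd z + 1) \<alpha>, snd z + \<alpha>)) xs"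

lemma gpoly_eval_Nil [simp]: "gpoly_eval [] t = 0"
  and gpoly_eval_Cons [simp]: "gpoly_eval (z # xs) t = fst z * t powr snd z + gpoly_eval xs t"
  and gpoly_eval_append [simp]: "gpoly_eval (xs @ ys) t = gpoly_eval xs t + gpoly_eval ys t"
  by (simp_all add: gpoly_eval_def)

lemma gpoly_coeff_Nil [simp]: "gpoly_coeff [] q = 0"
  and gpoly_coeff_Cons [simp]:
    "gpoly_coeff (z # xs) q = (if snd z = q then fst z else 0) + gpoly_coeff xs q"
  and gpoly_coeff_append [simp]: "gpoly_coeff (xs @ ys) q = gpoly_coeff xs q + gpoly_coeff ys q"
  by (simp_all add: gpoly_coeff_def)

lemma gpoly_norm_Nil [simp]: "gpoly_norm [] = 0"
  and gpoly_norm_Cons [simp]: "gpoly_norm (z # xs) = \<bar>fst z\<bar> + gpoly_norm xs"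
  and gpoly_norm_append [simp]: "gpoly_norm (xs @ ys) = gpoly_norm xs + gpoly_norm ys"
  by (simp_all add: gpoly_norm_def)

lemma gpoly_norm_nonneg: "0 \<le> gpoly_norm xs"
  by (induction xs) auto

lemma gpoly_integral_append [simp]:
  "gpoly_integral (xs @ ys) = gpoly_integral xs @ gpoly_integral ys"
  by (simp add: gpoly_integral_def)

lemma gpoly_RL_integral_append [simp]:
  "gpoly_RL_integral \<alpha> (xs @ ys) = gpoly_RL_integral \<alpha> xs @ gpoly_RL_integral \<alpha> ys"
  by (simp add: gpoly_RL_integral_def)

lemma gpoly_mult_Cons:
  "gpoly_mult (z # xs) ys = map (\<lambda>w. (fst z * fst w, snd z + snd w)) ys @ gpoly_mult xs ys"
  by (simp add: gpoly_mult_def)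

lemma gpoly_eval_mult:
  assumes "0 < t"
  shows "gpoly_eval (gpoly_mult xs ys) t = gpoly_eval xs t * gpoly_eval ys t"
proof (induction xs)
  case (Cons z xs)
  have "gpoly_eval (map (\<lambda>w. (fst z * fst w, snd z + snd w)) ys) t = fst z * t powr snd z * gpoly_eval ys t"
    using assms by (induction ys) (auto simp: powr_add algebra_simps)
  with Cons show ?case by (simp add: gpoly_mult_Cons algebra_simps)
qed (simp add: gpoly_mult_def)

lemma gpoly_norm_mult: "gpoly_norm (gpoly_mult xs ys) = gpoly_norm xs * gpoly_norm ys"
proof (induction xs)
  case (Cons z xs)
  have "gpoly_norm (map (\<lambda>w. (fst z * fst w, snd z + snd w)) ys) = \<bar>fst z\<bar> * gpoly_norm ys"
    by (induction ys) (auto simp: abs_mult algebra_simps)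
  with Cons show ?case by (simp add: gpoly_mult_Cons algebra_simps)
qed (simp add: gpoly_mult_def)

lemma set_gpoly_mult:
  "set (gpoly_mult xs ys) = (\<lambda>(z, w). (fst z * fst w, snd z + snd w)) ` (set xs \<times> set ys)"
  by (auto simp: gpoly_mult_def)

lemma gpoly_mult_exponents_ge:
  assumes "\<forall>z\<in>set xs. a \<le> snd z" "\<forall>z\<in>set ys. b \<le> snd z"
  shows "\<forall>z\<in>set (gpoly_mult xs ys). a + b \<le> snd z"
  using assms by (fastforce simp: set_gpoly_mult intro: add_mono)

lemma abs_gpoly_coeff_le_norm: "\<bar>gpoly_coeff xs q\<bar> \<le> gpoly_norm xs"
  by (induction xs) (auto intro: order.trans[OF abs_triangle_ineq])

lemma gpoly_coeff_eq_0:
  assumes "\<forall>z\<in>set xs. snd z \<noteq> q"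
  shows "gpoly_coeff xs q = 0"
  using assms by (induction xs) auto

lemma gpoly_eval_eq_sum_coeff:
  assumes "finite P" "snd ` set xs \<subseteq> P"
  shows "gpoly_eval xs t = (\<Sum>p\<in>P. gpoly_coeff xs p * t powr p)"
  using assms(2)
proof (induction xs)
  case (Cons z xs)
  have "(\<Sum>p\<in>P. (if snd z = p then fst z else 0) * t powr p) = fst z * t powr snd z"
    using Cons.prems assms(1) by (simp add: if_distrib[of "\<lambda>c. c * _"] cong: if_cong)
  with Cons show ?case by (simp add: distrib_right sum.distrib)
qed simp

lemma has_integral_gpoly_eval:
  assumes "\<forall>z\<in>set xs. -1 < snd z" "0 \<le> t"
  shows "(gpoly_eval xs has_integral gpoly_eval (gpoly_integral xs) t) {0..t}"
  using assms(1)
proof (induction xs)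
  case (Cons z xs)
  have "((\<lambda>u. fst z * u powr snd z) has_integral fst z * (t powr (snd z + 1) / (snd z + 1))) {0..t}"
    using Cons.prems assms(2) by (intro has_integral_mult_right has_integral_powr_from_0) auto
  from has_integral_add[OF this Cons.IH] Cons.prems show ?case
    by (simp add: gpoly_integral_def)
qed (simp add: gpoly_integral_def gpoly_eval_def[abs_def])

lemma integral_eq_gpoly_eval_integral:
  assumes "\<forall>u>0. f u = gpoly_eval xs u" "\<forall>z\<in>set xs. -1 < snd z" "0 \<le> t"
  shows "integral {0..t} f = gpoly_eval (gpoly_integral xs) t"
proof (rule integral_unique)
  show "(f has_integral gpoly_eval (gpoly_integral xs) t) {0..t}"
    by (rule has_integral_spike_finite[of "{0}", OF _ _ has_integral_gpoly_eval[OF assms(2,3)]])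
      (use assms(1) in auto)
qed

lemma gpoly_norm_integral_le:
  assumes "\<forall>z\<in>set xs. e \<le> snd z" "-1 < e"
  shows "gpoly_norm (gpoly_integral xs) \<le> gpoly_norm xs / (e + 1)"
  using assms(1)
proof (induction xs)
  case (Cons z xs)
  have "\<bar>fst z\<bar> / (snd z + 1) \<le> \<bar>fst z\<bar> / (e + 1)"
    using Cons.prems assms(2) by (intro divide_left_mono) auto
  with Cons assms(2) show ?case
    by (simp add: gpoly_integral_def add_divide_distrib)
qed (simp add: gpoly_integral_def)

lemma has_integral_RL_powr:
  fixes p x \<alpha> :: real
  assumes "-1 < p" "0 < x" "0 < \<alpha>"
  shows "((\<lambda>t. (x - t) powr (\<alpha> - 1) * t powr p) has_integral Beta (p + 1) \<alpha> * x powr (p + \<alpha>)) {0..x}"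
proof -
  have "((\<lambda>s. s powr (p + 1 - 1) * (1 - s) powr (\<alpha> - 1)) has_integral Beta (p + 1) \<alpha>) (cbox 0 1)"
    using has_integral_Beta_real[of "p + 1" \<alpha>] assms by simp
  from has_integral_affinity'[OF this, of "1/x" 0] assms
  have "((\<lambda>t. (t / x) powr p * (1 - t / x) powr (\<alpha> - 1)) has_integral Beta (p + 1) \<alpha> * x) {0..x}"
    by (simp add: divide_inverse_commute mult.commute)
  from has_integral_mult_right[OF this, of "x powr (p + \<alpha> - 1)"]
  have "((\<lambda>t. x powr (p + \<alpha> - 1) * ((t / x) powr p * (1 - t / x) powr (\<alpha> - 1)))
          has_integral Beta (p + 1) \<alpha> * x powr (p + \<alpha>)) {0..x}"
    using assms by (simp add: powr_add powr_diff field_simps)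
  moreover have "x powr (p + \<alpha> - 1) * ((t / x) powr p * (1 - t / x) powr (\<alpha> - 1))
      = (x - t) powr (\<alpha> - 1) * t powr p" if "t \<in> {0..x}" for t
  proof -
    have "1 - t / x = (x - t) / x"
      using assms by (simp add: field_simps)
    moreover have "x powr (p + \<alpha> - 1) = x powr p * x powr (\<alpha> - 1)"
      by (simp add: powr_add[symmetric] add_diff_eq)
    ultimately show ?thesis
      using that assms by (simp add: powr_divide field_simps)
  qed
  ultimately show ?thesis
    by (rule has_integral_cong[THEN iffD1, rotated])
qed

lemma integral_RL_eq_gpoly_eval:
  assumes "\<forall>u>0. f u = gpoly_eval xs u" "\<forall>z\<in>set xs. -1 < snd z" "0 < x" "0 < \<alpha>"
  shows "integral {0..x} (\<lambda>t. (x - t) powr (\<alpha> - 1) * f t) = gpoly_eval (gpoly_RL_integral \<alpha> xs) x"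
proof (rule integral_unique)
  have "((\<lambda>t. (x - t) powr (\<alpha> - 1) * gpoly_eval xs t) has_integral gpoly_eval (gpoly_RL_integral \<alpha> xs) x) {0..x}"
    using assms(2)
  proof (induction xs)
    case (Cons z xs)
    have "((\<lambda>t. fst z * ((x - t) powr (\<alpha> - 1) * t powr snd z))
            has_integral fst z * (Beta (snd z + 1) \<alpha> * x powr (snd z + \<alpha>))) {0..x}"
      using Cons.prems assms(3,4) by (intro has_integral_mult_right has_integral_RL_powr) auto
    from has_integral_add[OF this Cons.IH] Cons.prems show ?case
      by (simp add: gpoly_RL_integral_def algebra_simps)
  qed (simp add: gpoly_RL_integral_def)
  then show "((\<lambda>t. (x - t) powr (\<alpha> - 1) * f t) has_integral gpoly_eval (gpoly_RL_integral \<alpha> xs) x) {0..x}"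
    by (rule has_integral_spike_finite[of "{0}", rotated 2]) (use assms(1) in auto)
qed

lemma gpoly_norm_RL_integral_le:
  assumes "\<forall>z\<in>set xs. 0 \<le> snd z" "0 < \<alpha>"
  shows "gpoly_norm (gpoly_RL_integral \<alpha> xs) \<le> Beta 1 \<alpha> * gpoly_norm xs"
  using assms(1)
proof (induction xs)
  case (Cons z xs)
  have "0 < Beta (snd z + 1) \<alpha>"
    using Cons.prems assms(2) by (simp add: Beta_def)
  moreover have "Beta (snd z + 1) \<alpha> \<le> Beta 1 \<alpha>"
    using Cons.prems assms(2) by (intro Beta_real_mono) auto
  ultimately have "\<bar>fst z * Beta (snd z + 1) \<alpha>\<bar> \<le> Beta 1 \<alpha> * \<bar>fst z\<bar>"
    using mult_left_mono[of "Beta (snd z + 1) \<alpha>" "Beta 1 \<alpha>" "\<bar>fst z\<bar>"]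
    by (simp add: abs_mult mult.commute)
  with Cons show ?case
    by (simp add: gpoly_RL_integral_def distrib_left)
qed (simp add: gpoly_RL_integral_def)

lemma powr_sum_eq_0_imp_Min_coeff_eq_0:
  fixes e :: "real \<Rightarrow> real"
  assumes "finite P" "P \<noteq> {}" "0 < a" "\<forall>x\<in>{0<..a}. (\<Sum>p\<in>P. e p * x powr p) = 0"
  shows "e (Min P) = 0"
proof -
  define p0 where "p0 = Min P"
  have p0: "p0 \<in> P" "\<forall>p\<in>P. p0 \<le> p"
    using assms(1,2) by (auto simp: p0_def)
  \<comment> \<open>dividing by x powr p0 and letting x tend to 0 isolates the lowest coefficient\<close>
  have lim: "((\<lambda>x. \<Sum>p\<in>P. e p * x powr (p - p0)) \<longlongrightarrow> (\<Sum>p\<in>P. if p = p0 then e p else 0)) (at_right 0)"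
  proof (rule tendsto_sum)
    fix p assume "p \<in> P"
    show "((\<lambda>x. e p * x powr (p - p0)) \<longlongrightarrow> (if p = p0 then e p else 0)) (at_right 0)"
    proof (cases "p = p0")
      case True
      have "\<forall>\<^sub>F x in at_right 0. e p * x powr (p - p0) = e p"
        using True by (auto simp: eventually_at_right_field intro!: exI[of _ 1])
      with True show ?thesis by (simp add: tendsto_eventually)
    next
      case False
      with \<open>p \<in> P\<close> p0 have "0 < p - p0" by force
      then have "((\<lambda>x. x powr (p - p0)) \<longlongrightarrow> 0) (at_right 0)"
        by (intro tendsto_zero_powrI)
          (auto simp: eventually_at_right_field intro!: exI[of _ 1])
      with False show ?thesis using tendsto_mult_right_zero by auto
    qed
  qed
  have ev: "\<forall>\<^sub>F x in at_right 0. (\<Sum>p\<in>P. e p * x powr (p - p0)) = 0"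
    unfolding eventually_at_right_field
  proof (intro exI[of _ a] conjI allI impI)
    fix x :: real assume "0 < x" "x < a"
    have "(\<Sum>p\<in>P. e p * x powr (p - p0)) = (\<Sum>p\<in>P. e p * x powr p) / x powr p0"
      by (simp add: powr_diff sum_divide_distrib)
    with assms(4) \<open>0 < x\<close> \<open>x < a\<close> show "(\<Sum>p\<in>P. e p * x powr (p - p0)) = 0"
      by simp
  qed (use assms(3) in simp)
  have "(\<Sum>p\<in>P. if p = p0 then e p else 0) = 0"
    using tendsto_unique[OF trivial_limit_at_right_real lim tendsto_eventually[OF ev]] by simp
  with p0(1) assms(1) show ?thesis
    by (simp add: p0_def)
qed

lemma powr_sum_eq_0_imp_coeffs_eq_0:
  fixes e :: "real \<Rightarrow> real"
  assumes "finite P" "0 < a" "\<forall>x\<in>{0<..a}. (\<Sum>p\<in>P. e p * x powr p) = 0"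
  shows "\<forall>p\<in>P. e p = 0"
  using assms
proof (induction P rule: finite_remove_induct)
  case (remove P)
  have "e (Min P) = 0"
    using powr_sum_eq_0_imp_Min_coeff_eq_0[OF remove.hyps(1,2) remove.prems] .
  moreover have "Min P \<in> P"
    using remove.hyps(1,2) by simp
  then have "\<forall>p\<in>P - {Min P}. e p = 0"
    using remove.prems \<open>e (Min P) = 0\<close>
    by (intro remove.IH) (auto simp: sum.remove[OF remove.hyps(1)])
  ultimately show ?case by blast
qed simp

section \<open>Expansion of the iterated integrals\<close>

lemma finite_Gams:
  assumes "0 < \<alpha>"
  shows "finite (Gams n \<alpha>)"
proof -
  define m where "m = mA n \<alpha>"
  have "Gams n \<alpha> \<subseteq> (\<lambda>(i, j). real i + real j * \<alpha>) ` ({..m} \<times> {..nat \<lceil>real m / \<alpha>\<rceil>})"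
  proof
    fix g assume "g \<in> Gams n \<alpha>"
    then obtain i j :: nat where g: "g = real i + real j * \<alpha>" "0 < g" "g < real m"
      by (auto simp: Gams_def m_def)
    moreover have "0 \<le> real j * \<alpha>"
      using assms by simp
    ultimately have "real i < real m" "real j * \<alpha> < real m"
      by linarith+
    then have "i \<le> m" "real j \<le> real m / \<alpha>"
      using assms by (auto simp: field_simps)
    then have "i \<le> m" "j \<le> nat \<lceil>real m / \<alpha>\<rceil>"
      by linarith+
    then show "g \<in> (\<lambda>(i, j). real i + real j * \<alpha>) ` ({..m} \<times> {..nat \<lceil>real m / \<alpha>\<rceil>})"
      using g by (intro image_eqI[of _ _ "(i, j)"]) auto
  qed
  then show ?thesis
    by (rule finite_subset) auto
qed

lemma Gams_bounds:
  assumes "0 < \<alpha>" "\<alpha> \<le> 1" "\<gamma> \<in> Gams n \<alpha>"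
  shows "\<alpha> \<le> \<gamma>" "\<gamma> < real (mA n \<alpha>)"
proof -
  from assms obtain i j :: nat where g: "\<gamma> = real i + real j * \<alpha>" "0 < \<gamma>" "\<gamma> < real (mA n \<alpha>)"
    by (auto simp: Gams_def)
  show "\<gamma> < real (mA n \<alpha>)"
    using g by simp
  show "\<alpha> \<le> \<gamma>"
  proof (cases "i = 0")
    case True
    with g have "1 \<le> j"
      by (cases j) auto
    with g True assms show ?thesis
      by simp
  next
    case False
    with g assms show ?thesis
      by (auto intro: add_increasing2 order.trans[of _ 1])
  qed
qed

definition phi_gpoly :: "(real \<Rightarrow> real) \<Rightarrow> real set \<Rightarrow> gpoly" where
  "phi_gpoly c S = map (\<lambda>g. (g * c g, g - 1)) (sorted_list_of_set S)"

lemma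
  assumes "finite S"
  shows gpoly_eval_phi_gpoly: "gpoly_eval (phi_gpoly c S) u = (\<Sum>g\<in>S. g * c g * u powr (g - 1))"
    and set_phi_gpoly: "set (phi_gpoly c S) = (\<lambda>g. (g * c g, g - 1)) ` S"
    and gpoly_norm_phi_gpoly: "gpoly_norm (phi_gpoly c S) = (\<Sum>g\<in>S. \<bar>g * c g\<bar>)"
  using assms
  by (simp_all add: phi_gpoly_def gpoly_eval_def gpoly_norm_def o_def sum_list_distinct_conv_sum_set)

lemma phi_eq_low_high:
  assumes "0 < \<alpha>" "k \<noteq> 1"
  shows "phi n \<alpha> c k u = gpoly_eval (phi_gpoly c {g\<in>Gams n \<alpha>. g < \<gamma>}) u
                         + gpoly_eval (phi_gpoly c {g\<in>Gams n \<alpha>. \<gamma> \<le> g}) u"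
proof -
  let ?f = "\<lambda>g. g * c g * u powr (g - 1)"
  have fin: "finite (Gams n \<alpha>)"
    using finite_Gams[OF assms(1)] .
  have "(\<Sum>g\<in>Gams n \<alpha>. ?f g) = (\<Sum>g\<in>{g\<in>Gams n \<alpha>. g < \<gamma>} \<union> {g\<in>Gams n \<alpha>. \<gamma> \<le> g}. ?f g)"
    by (rule sum.cong) auto
  also have "\<dots> = (\<Sum>g\<in>{g\<in>Gams n \<alpha>. g < \<gamma>}. ?f g) + (\<Sum>g\<in>{g\<in>Gams n \<alpha>. \<gamma> \<le> g}. ?f g)"
    by (rule sum.union_disjoint) (use fin in auto)
  finally show ?thesis
    using fin assms(2) by (simp add: phi_def gpoly_eval_phi_gpoly)
qed

text \<open>
  B collects the terms with exponent at least gamma: after the Riemann-Liouville integration they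
  cannot contribute to the coefficient of x powr gamma, so only the norm of A has to be controlled.
\<close>
definition split_expansion :: "real \<Rightarrow> real \<Rightarrow> real \<Rightarrow> (real \<Rightarrow> real) \<Rightarrow> gpoly \<Rightarrow> gpoly \<Rightarrow> bool" where
  "split_expansion e \<gamma> K f A B \<longleftrightarrow>
     (\<forall>u>0. f u = gpoly_eval A u + gpoly_eval B u) \<and>
     (\<forall>z\<in>set A. e \<le> snd z) \<and> gpoly_norm A \<le> K \<and> (\<forall>z\<in>set B. \<gamma> \<le> snd z)"

lemma split_expansion_mono:
  assumes "split_expansion e \<gamma> K f A B" "e' \<le> e" "\<gamma>' \<le> \<gamma>" "K \<le> K'"
  shows "split_expansion e' \<gamma>' K' f A B"
  using assms by (fastforce simp: split_expansion_def)

lemma split_expansion_integral: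
  assumes "split_expansion e \<gamma> K f A B" "-1 < e" "-1 < \<gamma>"
  shows "split_expansion (e + 1) (\<gamma> + 1) (K / (e + 1)) (\<lambda>t. integral {0..t} f)
           (gpoly_integral A) (gpoly_integral B)"
proof -
  have f: "\<forall>u>0. f u = gpoly_eval (A @ B) u" and A: "\<forall>z\<in>set A. e \<le> snd z"
    and "gpoly_norm A \<le> K" and B: "\<forall>z\<in>set B. \<gamma> \<le> snd z"
    using assms(1) by (simp_all add: split_expansion_def)
  have "integral {0..t} f = gpoly_eval (gpoly_integral (A @ B)) t" if "0 < t" for t
    using assms(2,3) A B that by (intro integral_eq_gpoly_eval_integral[OF f]) fastforce+
  moreover have "gpoly_norm (gpoly_integral A) \<le> K / (e + 1)"
    using gpoly_norm_integral_le[OF A assms(2)] \<open>gpoly_norm A \<le> K\<close> assms(2)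
    by (smt (verit) divide_right_mono)
  ultimately show ?thesis
    using A B by (auto simp: split_expansion_def gpoly_integral_def)
qed

lemma split_expansion_mult:
  assumes "split_expansion e \<gamma> K f A B"
    and "\<forall>z\<in>set L. eL \<le> snd z" "\<forall>z\<in>set H. eH \<le> snd z"
    and "\<gamma>' \<le> eL + \<gamma>" "\<gamma>' \<le> eH + e" "\<gamma>' \<le> eH + \<gamma>"
  shows "split_expansion (eL + e) \<gamma>' (gpoly_norm L * K)
           (\<lambda>u. (gpoly_eval L u + gpoly_eval H u) * f u)
           (gpoly_mult L A) (gpoly_mult L B @ gpoly_mult H A @ gpoly_mult H B)"
proof -
  have f: "\<forall>u>0. f u = gpoly_eval A u + gpoly_eval B u" and A: "\<forall>z\<in>set A. e \<le> snd z"
    and "gpoly_norm A \<le> K" and B: "\<forall>z\<in>set B. \<gamma> \<le> snd z"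
    using assms(1) by (simp_all add: split_expansion_def)
  have "gpoly_norm L * gpoly_norm A \<le> gpoly_norm L * K"
    using \<open>gpoly_norm A \<le> K\<close> gpoly_norm_nonneg by (rule mult_left_mono)
  moreover have "\<forall>z\<in>set (gpoly_mult L B @ gpoly_mult H A @ gpoly_mult H B). \<gamma>' \<le> snd z"
    using gpoly_mult_exponents_ge[OF assms(2) B] gpoly_mult_exponents_ge[OF assms(3) A]
      gpoly_mult_exponents_ge[OF assms(3) B] assms(4-6)
    by (fastforce simp: add.commute)
  moreover have "\<forall>u>0. (gpoly_eval L u + gpoly_eval H u) * f u
      = gpoly_eval (gpoly_mult L A) u + gpoly_eval (gpoly_mult L B @ gpoly_mult H A @ gpoly_mult H B) u"
    using f by (simp add: gpoly_eval_mult ring_distribs add.assoc)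
  ultimately show ?thesis
    using gpoly_mult_exponents_ge[OF assms(2) A]
    by (simp add: split_expansion_def gpoly_norm_mult mult.commute)
qed

lemma iterint_Cons_split_expansion:
  fixes n :: nat and c :: "real \<Rightarrow> real"
  assumes "0 < \<alpha>" "\<alpha> \<le> 1" "0 < \<gamma>" "0 \<le> J"
    and IH: "split_expansion 0 \<gamma> J (iterint (phi n \<alpha> c) \<beta>) A B"
  defines "K \<equiv> max 1 (gpoly_norm (phi_gpoly c {g\<in>Gams n \<alpha>. g < \<gamma>}) / \<alpha>)"
  shows "\<exists>A B. split_expansion 0 \<gamma> (K * J) (iterint (phi n \<alpha> c) (k # \<beta>)) A B"
proof (cases "k = 1")
  case True
  then have "iterint (phi n \<alpha> c) (k # \<beta>) = (\<lambda>t. integral {0..t} (iterint (phi n \<alpha> c) \<beta>))"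
    by (simp add: phi_def fun_eq_iff)
  with split_expansion_integral[OF IH] assms(3)
  have "split_expansion 1 (\<gamma> + 1) J (iterint (phi n \<alpha> c) (k # \<beta>)) (gpoly_integral A) (gpoly_integral B)"
    by simp
  moreover have "J \<le> K * J"
    using assms(4) by (simp add: K_def mult_le_cancel_right1)
  ultimately have "split_expansion 0 \<gamma> (K * J) (iterint (phi n \<alpha> c) (k # \<beta>))
                     (gpoly_integral A) (gpoly_integral B)"
    by (elim split_expansion_mono) auto
  then show ?thesis
    by blast
next
  case False
  define L where "L = phi_gpoly c {g\<in>Gams n \<alpha>. g < \<gamma>}"
  define H where "H = phi_gpoly c {g\<in>Gams n \<alpha>. \<gamma> \<le> g}"
  have fin: "finite {g\<in>Gams n \<alpha>. g < \<gamma>}" "finite {g\<in>Gams n \<alpha>. \<gamma> \<le> g}"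
    using finite_Gams[OF assms(1)] by simp_all
  have L: "\<forall>z\<in>set L. \<alpha> - 1 \<le> snd z"
    using Gams_bounds(1)[OF assms(1,2)] by (auto simp: L_def set_phi_gpoly[OF fin(1)])
  have H: "\<forall>z\<in>set H. \<gamma> - 1 \<le> snd z"
    by (auto simp: H_def set_phi_gpoly[OF fin(2)])
  have "iterint (phi n \<alpha> c) (k # \<beta>)
        = (\<lambda>t. integral {0..t} (\<lambda>u. (gpoly_eval L u + gpoly_eval H u) * iterint (phi n \<alpha> c) \<beta> u))"
    using phi_eq_low_high[OF assms(1) False] by (simp add: L_def H_def fun_eq_iff)
  with split_expansion_integral[OF split_expansion_mult[OF IH L H, where \<gamma>'="\<gamma> - 1"]] assms(1,3)
  have "split_expansion \<alpha> \<gamma> (gpoly_norm L * J / \<alpha>) (iterint (phi n \<alpha> c) (k # \<beta>))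
          (gpoly_integral (gpoly_mult L A))
          (gpoly_integral (gpoly_mult L B @ gpoly_mult H A @ gpoly_mult H B))"
    by simp
  moreover have "gpoly_norm L / \<alpha> * J \<le> K * J"
    using assms(4) by (intro mult_right_mono) (auto simp: K_def L_def)
  ultimately have "split_expansion 0 \<gamma> (K * J) (iterint (phi n \<alpha> c) (k # \<beta>))
                     (gpoly_integral (gpoly_mult L A))
                     (gpoly_integral (gpoly_mult L B @ gpoly_mult H A @ gpoly_mult H B))"
    using assms(1) by (elim split_expansion_mono) auto
  then show ?thesis
    by blast
qed

lemma iterint_split_expansion:
  fixes n :: nat and c :: "real \<Rightarrow> real"
  assumes "0 < \<alpha>" "\<alpha> \<le> 1" "0 < \<gamma>"
  defines "K \<equiv> max 1 (gpoly_norm (phi_gpoly c {g\<in>Gams n \<alpha>. g < \<gamma>}) / \<alpha>)"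
  shows "\<exists>A B. split_expansion 0 \<gamma> (K ^ length \<beta>) (iterint (phi n \<alpha> c) \<beta>) A B"
proof (induction \<beta>)
  case Nil
  have "split_expansion 0 \<gamma> (K ^ length []) (iterint (phi n \<alpha> c) []) [(1, 0)] []"
    by (simp add: split_expansion_def)
  then show ?case
    by blast
next
  case (Cons k \<beta>)
  then obtain A B where "split_expansion 0 \<gamma> (K ^ length \<beta>) (iterint (phi n \<alpha> c) \<beta>) A B"
    by blast
  moreover have "0 \<le> K ^ length \<beta>"
    by (simp add: K_def)
  ultimately show ?case
    using iterint_Cons_split_expansion[OF assms(1-3), of "K ^ length \<beta>"]
    by (simp add: K_def del: iterint.simps)
qed

section \<open>Bounds on the coefficients\<close>

lemma finite_Lam: "finite (Lam s)"
  using finite_lists_length_eq[of "{1::nat, 2}" s] by (simp add: Lam_def conj_commute)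

lemma QA_eq_sum_powr:
  assumes "0 < \<alpha>" "0 < x" "finite P"
    and "\<forall>\<beta> u. 0 < u \<longrightarrow> iterint (phi n \<alpha> c) \<beta> u = gpoly_eval (X \<beta>) u"
    and "\<forall>\<beta>. \<forall>z\<in>set (X \<beta>). -1 < snd z"
    and "\<forall>s<n. \<forall>\<beta>\<in>Lam s. snd ` set (gpoly_RL_integral \<alpha> (X \<beta>)) \<subseteq> P"
  shows "QA n \<alpha> c0 D c x = (\<Sum>p\<in>P. (\<Sum>s<n. \<Sum>\<beta>\<in>Lam s.
           D \<beta> (0, c0) / Gamma \<alpha> * gpoly_coeff (gpoly_RL_integral \<alpha> (X \<beta>)) p) * x powr p)"
proof -
  have "QA n \<alpha> c0 D c x = (\<Sum>s<n. \<Sum>\<beta>\<in>Lam s. \<Sum>p\<in>P.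
          D \<beta> (0, c0) / Gamma \<alpha> * gpoly_coeff (gpoly_RL_integral \<alpha> (X \<beta>)) p * x powr p)"
    unfolding QA_def
  proof (intro sum.cong refl)
    fix s \<beta> assume "s \<in> {..<n}" "\<beta> \<in> Lam s"
    have "integral {0..x} (\<lambda>t. (x - t) powr (\<alpha> - 1) * iterint (phi n \<alpha> c) \<beta> t)
        = gpoly_eval (gpoly_RL_integral \<alpha> (X \<beta>)) x"
      by (rule integral_RL_eq_gpoly_eval) (use assms in auto)
    also have "\<dots> = (\<Sum>p\<in>P. gpoly_coeff (gpoly_RL_integral \<alpha> (X \<beta>)) p * x powr p)"
      by (rule gpoly_eval_eq_sum_coeff) (use assms \<open>s \<in> {..<n}\<close> \<open>\<beta> \<in> Lam s\<close> in auto)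
    finally show "D \<beta> (0, c0) / Gamma \<alpha> * integral {0..x} (\<lambda>t. (x - t) powr (\<alpha> - 1) * iterint (phi n \<alpha> c) \<beta> t)
        = (\<Sum>p\<in>P. D \<beta> (0, c0) / Gamma \<alpha> * gpoly_coeff (gpoly_RL_integral \<alpha> (X \<beta>)) p * x powr p)"
      by (simp add: sum_distrib_left mult.assoc)
  qed
  then show ?thesis
    by (simp add: sum.swap[of _ P] sum.swap[of _ _ "Lam _"] sum_distrib_right)
qed

lemma sum_powr_restrict:
  fixes f :: "real \<Rightarrow> real"
  assumes "finite P" "S \<subseteq> P"
  shows "(\<Sum>p\<in>P. (if p \<in> S then f p else 0) * x powr p) = (\<Sum>p\<in>S. f p * x powr p)"
proof -
  have "(\<Sum>p\<in>P. (if p \<in> S then f p else 0) * x powr p) = (\<Sum>p\<in>P \<inter> S. f p * x powr p)"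
    using assms(1) by (simp add: sum.inter_restrict if_distrib[of "\<lambda>v. v * _"] cong: if_cong)
  with assms(2) show ?thesis
    by (simp add: Int_absorb1)
qed

lemma coeffs_cond_coeff_eq:
  assumes "0 < \<alpha>" "\<alpha> \<le> 1" "0 < a" "coeffs_cond n \<alpha> a c0 D c" "\<gamma> \<in> Gams n \<alpha>"
    and "\<forall>\<beta> u. 0 < u \<longrightarrow> iterint (phi n \<alpha> c) \<beta> u = gpoly_eval (X \<beta>) u"
    and "\<forall>\<beta>. \<forall>z\<in>set (X \<beta>). -1 < snd z"
  shows "c \<gamma> = (\<Sum>s<n. \<Sum>\<beta>\<in>Lam s. D \<beta> (0, c0) / Gamma \<alpha> * gpoly_coeff (gpoly_RL_integral \<alpha> (X \<beta>)) \<gamma>)"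
proof -
  obtain F d where F: "finite F" "F \<subseteq> {p. \<exists>i j::nat. p = real i + real j * \<alpha> \<and> real (mA n \<alpha>) \<le> p}"
    and eq: "\<forall>x\<in>{0<..a}. QA n \<alpha> c0 D c x - SA n \<alpha> c0 c x + c0 = (\<Sum>p\<in>F. d p * x powr p)"
    using assms(4) by (auto simp: coeffs_cond_def)
  define q where "q p = (\<Sum>s<n. \<Sum>\<beta>\<in>Lam s. D \<beta> (0, c0) / Gamma \<alpha> * gpoly_coeff (gpoly_RL_integral \<alpha> (X \<beta>)) p)"
    for p
  define P where "P = (\<Union>s<n. \<Union>\<beta>\<in>Lam s. snd ` set (gpoly_RL_integral \<alpha> (X \<beta>))) \<union> Gams n \<alpha> \<union> F"
  define E where "E p = q p - (if p \<in> Gams n \<alpha> then c p else 0) - (if p \<in> F then d p else 0)" for p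
  have P: "finite P" "Gams n \<alpha> \<subseteq> P" "F \<subseteq> P"
    using F(1) finite_Gams[OF assms(1)] finite_Lam by (auto simp: P_def)
  have "\<forall>s<n. \<forall>\<beta>\<in>Lam s. snd ` set (gpoly_RL_integral \<alpha> (X \<beta>)) \<subseteq> P"
    by (auto simp: P_def)
  note QA = QA_eq_sum_powr[OF assms(1) _ P(1) assms(6,7) this]
  have "(\<Sum>p\<in>P. E p * x powr p) = 0" if x: "x \<in> {0<..a}" for x
  proof -
    have "QA n \<alpha> c0 D c x = (\<Sum>p\<in>P. q p * x powr p)"
      using QA x by (simp add: q_def)
    then have "(\<Sum>p\<in>P. E p * x powr p)
        = QA n \<alpha> c0 D c x - (SA n \<alpha> c0 c x - c0) - (\<Sum>p\<in>F. d p * x powr p)"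
      using sum_powr_restrict[OF P(1,2), of c x] sum_powr_restrict[OF P(1,3), of d x]
      by (simp add: E_def SA_def left_diff_distrib sum_subtractf)
    with eq x show ?thesis
      by force
  qed
  moreover have "\<gamma> \<in> P" "\<gamma> \<notin> F"
    using assms(5) F(2) Gams_bounds(2)[OF assms(1,2,5)] by (auto simp: P_def)
  ultimately have "E \<gamma> = 0"
    using powr_sum_eq_0_imp_coeffs_eq_0[OF P(1) assms(3)] by blast
  with assms(5) \<open>\<gamma> \<notin> F\<close> show ?thesis
    by (simp add: E_def q_def)
qed

definition coeff_step :: "nat \<Rightarrow> real \<Rightarrow> real \<Rightarrow> real \<Rightarrow> real" where
  "coeff_step n \<alpha> M K = M / Gamma \<alpha> * Beta 1 \<alpha> *
     (\<Sum>s<n. real (card (Lam s)) * max 1 (real (card (Gams n \<alpha>)) * real (mA n \<alpha>) * K / \<alpha>) ^ s)"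

lemma abs_coeff_le_if_split_expansions:
  assumes "0 < \<alpha>" "\<alpha> \<le> 1" "0 < a" "coeffs_cond n \<alpha> a c0 D c" "\<gamma> \<in> Gams n \<alpha>"
    and "\<forall>s<n. \<forall>\<beta>\<in>Lam s. \<bar>D \<beta> (0, c0)\<bar> \<le> M"
    and AB: "\<And>\<beta>. split_expansion 0 \<gamma> (J ^ length \<beta>) (iterint (phi n \<alpha> c) \<beta>) (A \<beta>) (B \<beta>)"
  shows "\<bar>c \<gamma>\<bar> \<le> M / Gamma \<alpha> * Beta 1 \<alpha> * (\<Sum>s<n. real (card (Lam s)) * J ^ s)"
proof -
  have "0 < \<gamma>"
    using Gams_bounds(1)[OF assms(1,2,5)] assms(1) by simp
  have B: "gpoly_coeff (gpoly_RL_integral \<alpha> (B \<beta>)) \<gamma> = 0" for \<beta>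
    using AB[of \<beta>] assms(1)
    by (intro gpoly_coeff_eq_0) (fastforce simp: split_expansion_def gpoly_RL_integral_def)
  have summand_bound: "\<bar>D \<beta> (0, c0) / Gamma \<alpha> * gpoly_coeff (gpoly_RL_integral \<alpha> (A \<beta>)) \<gamma>\<bar>
      \<le> M / Gamma \<alpha> * (Beta 1 \<alpha> * J ^ s)" if "s < n" "\<beta> \<in> Lam s" for s \<beta>
  proof -
    have w: "\<bar>D \<beta> (0, c0) / Gamma \<alpha>\<bar> \<le> M / Gamma \<alpha>"
      using assms(6) that Gamma_real_pos[OF assms(1)] by (simp add: divide_right_mono)
    have A: "\<forall>z\<in>set (A \<beta>). 0 \<le> snd z" "gpoly_norm (A \<beta>) \<le> J ^ s"
      using AB[of \<beta>] that by (auto simp: split_expansion_def Lam_def)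
    have "0 < Beta 1 \<alpha>"
      using assms(1) by (simp add: Beta_def)
    have "\<bar>gpoly_coeff (gpoly_RL_integral \<alpha> (A \<beta>)) \<gamma>\<bar> \<le> gpoly_norm (gpoly_RL_integral \<alpha> (A \<beta>))"
      by (rule abs_gpoly_coeff_le_norm)
    also have "\<dots> \<le> Beta 1 \<alpha> * gpoly_norm (A \<beta>)"
      by (rule gpoly_norm_RL_integral_le[OF A(1) assms(1)])
    also have "\<dots> \<le> Beta 1 \<alpha> * J ^ s"
      using A(2) \<open>0 < Beta 1 \<alpha>\<close> by (intro mult_left_mono) auto
    finally show ?thesis
      unfolding abs_mult[of "D \<beta> (0, c0) / Gamma \<alpha>"]
      using w order.trans[OF abs_ge_zero w] by (intro mult_mono) auto
  qed
  have "c \<gamma> = (\<Sum>s<n. \<Sum>\<beta>\<in>Lam s. D \<beta> (0, c0) / Gamma \<alpha> * gpoly_coeff (gpoly_RL_integral \<alpha> (A \<beta> @ B \<beta>)) \<gamma>)"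
  proof (rule coeffs_cond_coeff_eq[OF assms(1-5)])
    show "\<forall>\<beta> u. 0 < u \<longrightarrow> iterint (phi n \<alpha> c) \<beta> u = gpoly_eval (A \<beta> @ B \<beta>) u"
      using AB by (simp add: split_expansion_def)
    show "\<forall>\<beta>. \<forall>z\<in>set (A \<beta> @ B \<beta>). -1 < snd z"
      using AB \<open>0 < \<gamma>\<close> by (fastforce simp: split_expansion_def)
  qed
  then have "\<bar>c \<gamma>\<bar> \<le> (\<Sum>s<n. \<Sum>\<beta>\<in>Lam s. \<bar>D \<beta> (0, c0) / Gamma \<alpha> * gpoly_coeff (gpoly_RL_integral \<alpha> (A \<beta>)) \<gamma>\<bar>)"
    using B by (simp add: order.trans[OF sum_abs sum_mono])
  also have "\<dots> \<le> (\<Sum>s<n. \<Sum>\<beta>\<in>Lam s. M / Gamma \<alpha> * (Beta 1 \<alpha> * J ^ s))"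
    using summand_bound by (intro sum_mono) auto
  also have "\<dots> = M / Gamma \<alpha> * Beta 1 \<alpha> * (\<Sum>s<n. real (card (Lam s)) * J ^ s)"
    by (simp add: sum_distrib_left mult_ac)
  finally show ?thesis .
qed

lemma gpoly_norm_phi_gpoly_below_le:
  assumes "0 < \<alpha>" "\<alpha> \<le> 1" "0 \<le> K" "\<forall>g\<in>Gams n \<alpha>. g < \<gamma> \<longrightarrow> \<bar>c g\<bar> \<le> K"
  shows "gpoly_norm (phi_gpoly c {g\<in>Gams n \<alpha>. g < \<gamma>}) \<le> real (card (Gams n \<alpha>)) * (real (mA n \<alpha>) * K)"
proof -
  have fin: "finite (Gams n \<alpha>)"
    using finite_Gams[OF assms(1)] .
  have "gpoly_norm (phi_gpoly c {g\<in>Gams n \<alpha>. g < \<gamma>}) = (\<Sum>g\<in>{g\<in>Gams n \<alpha>. g < \<gamma>}. \<bar>g * c g\<bar>)"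
    using fin by (simp add: gpoly_norm_phi_gpoly)
  also have "\<dots> \<le> (\<Sum>g\<in>{g\<in>Gams n \<alpha>. g < \<gamma>}. real (mA n \<alpha>) * K)"
  proof (rule sum_mono)
    fix g assume g: "g \<in> {g\<in>Gams n \<alpha>. g < \<gamma>}"
    then have "0 < g" "g < real (mA n \<alpha>)"
      using Gams_bounds[OF assms(1,2)] assms(1) by force+
    with g assms(4) show "\<bar>g * c g\<bar> \<le> real (mA n \<alpha>) * K"
      by (auto simp: abs_mult intro: mult_mono)
  qed
  also have "\<dots> \<le> (\<Sum>g\<in>Gams n \<alpha>. real (mA n \<alpha>) * K)"
    using fin assms(3) by (intro sum_mono2) auto
  finally show ?thesis
    by simp
qed

lemma abs_coeff_le_coeff_step:
  assumes "0 < \<alpha>" "\<alpha> \<le> 1" "0 < a" "coeffs_cond n \<alpha> a c0 D c" "\<gamma> \<in> Gams n \<alpha>"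
    and "\<forall>s<n. \<forall>\<beta>\<in>Lam s. \<bar>D \<beta> (0, c0)\<bar> \<le> M"
    and "0 \<le> K" "\<forall>g\<in>Gams n \<alpha>. g < \<gamma> \<longrightarrow> \<bar>c g\<bar> \<le> K"
  shows "\<bar>c \<gamma>\<bar> \<le> coeff_step n \<alpha> M K"
proof -
  define J where "J = max 1 (gpoly_norm (phi_gpoly c {g\<in>Gams n \<alpha>. g < \<gamma>}) / \<alpha>)"
  define K' where "K' = max 1 (real (card (Gams n \<alpha>)) * real (mA n \<alpha>) * K / \<alpha>)"
  have "0 < \<gamma>"
    using Gams_bounds(1)[OF assms(1,2,5)] assms(1) by simp
  have "gpoly_norm (phi_gpoly c {g\<in>Gams n \<alpha>. g < \<gamma>}) / \<alpha>
      \<le> real (card (Gams n \<alpha>)) * (real (mA n \<alpha>) * K) / \<alpha>"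
    using gpoly_norm_phi_gpoly_below_le[OF assms(1,2,7,8)] assms(1) by (intro divide_right_mono) auto
  then have "J \<le> K'"
    by (auto simp: J_def K'_def mult.assoc intro: max.mono)
  have "\<forall>\<beta>. \<exists>A B. split_expansion 0 \<gamma> (K' ^ length \<beta>) (iterint (phi n \<alpha> c) \<beta>) A B"
  proof
    fix \<beta>
    obtain A B where "split_expansion 0 \<gamma> (J ^ length \<beta>) (iterint (phi n \<alpha> c) \<beta>) A B"
      using iterint_split_expansion[OF assms(1,2) \<open>0 < \<gamma>\<close>, where n=n and c=c and \<beta>=\<beta>] unfolding J_def by blast
    moreover have "J ^ length \<beta> \<le> K' ^ length \<beta>"
      using \<open>J \<le> K'\<close> by (intro power_mono) (auto simp: J_def)
    ultimately have "split_expansion 0 \<gamma> (K' ^ length \<beta>) (iterint (phi n \<alpha> c) \<beta>) A B"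
      by (elim split_expansion_mono) auto
    then show "\<exists>A B. split_expansion 0 \<gamma> (K' ^ length \<beta>) (iterint (phi n \<alpha> c) \<beta>) A B"
      by blast
  qed
  then obtain A B where "\<And>\<beta>. split_expansion 0 \<gamma> (K' ^ length \<beta>) (iterint (phi n \<alpha> c) \<beta>) (A \<beta>) (B \<beta>)"
    by metis
  from abs_coeff_le_if_split_expansions[OF assms(1-6) this] show ?thesis
    by (simp add: coeff_step_def K'_def)
qed

lemma coeffs_cond_coeffs_bounded:
  assumes "0 < \<alpha>" "\<alpha> \<le> 1" "0 < a"
  obtains K where "0 \<le> K"
    and "\<And>c0 D c \<gamma>. coeffs_cond n \<alpha> a c0 D c \<Longrightarrow> \<forall>s<n. \<forall>\<beta>\<in>Lam s. \<bar>D \<beta> (0, c0)\<bar> \<le> M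
           \<Longrightarrow> \<gamma> \<in> Gams n \<alpha> \<Longrightarrow> \<bar>c \<gamma>\<bar> \<le> K"
proof -
  define next_bound where "next_bound K = max K (coeff_step n \<alpha> M K)" for K
  let ?below = "\<lambda>\<gamma>. {g\<in>Gams n \<alpha>. g < \<gamma>}"
  have fin: "finite (Gams n \<alpha>)"
    using finite_Gams[OF assms(1)] .
  have nonneg: "0 \<le> (next_bound ^^ j) 0" for j
    by (induction j) (auto simp: next_bound_def le_max_iff_disj)
  have bound: "\<bar>c \<gamma>\<bar> \<le> (next_bound ^^ j) 0"
    if "coeffs_cond n \<alpha> a c0 D c" "\<forall>s<n. \<forall>\<beta>\<in>Lam s. \<bar>D \<beta> (0, c0)\<bar> \<le> M"
      and "\<gamma> \<in> Gams n \<alpha>" "card (?below \<gamma>) < j" for c0 D c \<gamma> j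
    using that(3,4)
  proof (induction j arbitrary: \<gamma>)
    case (Suc j)
    have "\<forall>g\<in>Gams n \<alpha>. g < \<gamma> \<longrightarrow> \<bar>c g\<bar> \<le> (next_bound ^^ j) 0"
    proof (intro ballI impI Suc.IH)
      fix g assume "g \<in> Gams n \<alpha>" "g < \<gamma>"
      then have "?below g \<subset> ?below \<gamma>"
        by auto
      then have "card (?below g) < card (?below \<gamma>)"
        using fin by (intro psubset_card_mono) auto
      with Suc.prems(2) show "card (?below g) < j"
        by simp
    qed
    then have "\<bar>c \<gamma>\<bar> \<le> coeff_step n \<alpha> M ((next_bound ^^ j) 0)"
      by (intro abs_coeff_le_coeff_step[OF assms that(1) Suc.prems(1) that(2) nonneg])
    moreover have "coeff_step n \<alpha> M ((next_bound ^^ j) 0) \<le> next_bound ((next_bound ^^ j) 0)"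
      by (simp add: next_bound_def)
    ultimately show ?case
      by simp
  qed simp
  have "card (?below \<gamma>) < card (Gams n \<alpha>)" if "\<gamma> \<in> Gams n \<alpha>" for \<gamma>
    using fin that by (intro psubset_card_mono) auto
  then show ?thesis
    using that[OF nonneg] bound by blast
qed

section \<open>Hoelder estimates\<close>

definition has_holder_const :: "real \<Rightarrow> real \<Rightarrow> real \<Rightarrow> (real \<Rightarrow> real) \<Rightarrow> bool" where
  "has_holder_const \<delta> h K v \<longleftrightarrow>
     (\<forall>x y. 0 \<le> x \<longrightarrow> x < y \<longrightarrow> y \<le> h \<longrightarrow> \<bar>v y - v x\<bar> \<le> K * (y - x) powr \<delta>)"

lemma has_holder_constD:
  "has_holder_const \<delta> h K v \<Longrightarrow> 0 \<le> x \<Longrightarrow> x < y \<Longrightarrow> y \<le> h \<Longrightarrow> \<bar>v y - v x\<bar> \<le> K * (y - x) powr \<delta>"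
  by (simp add: has_holder_const_def)

lemma continuous_on_if_has_holder_const:
  assumes "has_holder_const \<delta> h K v" "0 < \<delta>"
  shows "continuous_on {0..h} v"
  unfolding continuous_on_def
proof
  fix x assume x: "x \<in> {0..h}"
  have ev: "\<forall>\<^sub>F x' in at x within {0..h}. norm (v x' - v x) \<le> K * \<bar>x' - x\<bar> powr \<delta>"
    unfolding eventually_at_filter
  proof (intro always_eventually allI impI)
    fix x' assume "x' \<in> {0..h}"
    with x assms(1) show "norm (v x' - v x) \<le> K * \<bar>x' - x\<bar> powr \<delta>"
      by (cases x x' rule: linorder_cases)
        (auto simp: has_holder_const_def abs_minus_commute)
  qed
  have "((\<lambda>x'. \<bar>x' - x\<bar>) \<longlongrightarrow> 0) (at x within {0..h})"
    by (intro tendsto_eq_intros) auto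
  then have "((\<lambda>x'. \<bar>x' - x\<bar> powr \<delta>) \<longlongrightarrow> 0) (at x within {0..h})"
    using assms(2) by (intro tendsto_zero_powrI tendsto_const always_eventually) auto
  then have "((\<lambda>x'. K * \<bar>x' - x\<bar> powr \<delta>) \<longlongrightarrow> 0) (at x within {0..h})"
    by (rule tendsto_mult_right_zero)
  from Lim_null_comparison[OF ev this] show "(v \<longlongrightarrow> v x) (at x within {0..h})"
    by (rule LIM_zero_cancel)
qed

lemma has_holder_const_norm0hol:
  assumes "v \<in> C0hol \<gamma> h"
  shows "has_holder_const \<gamma> h (norm0hol \<gamma> h v) v"
  unfolding has_holder_const_def
proof (intro allI impI)
  fix x y :: real assume xy: "0 \<le> x" "x < y" "y \<le> h"
  have "\<bar>v x - v y\<bar> / (y - x) powr \<gamma> \<in> holder_quots \<gamma> h v"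
    unfolding holder_quots_def using xy by (auto intro!: image_eqI[of _ _ "(x, y)"])
  then have "\<bar>v x - v y\<bar> / (y - x) powr \<gamma> \<le> holder_semi0 \<gamma> h v"
    unfolding holder_semi0_def using assms by (intro cSup_upper) (auto simp: C0hol_def)
  then have "\<bar>v x - v y\<bar> / (y - x) powr \<gamma> \<le> norm0hol \<gamma> h v"
    by (simp add: norm0hol_def)
  with xy show "\<bar>v y - v x\<bar> \<le> norm0hol \<gamma> h v * (y - x) powr \<gamma>"
    by (simp add: divide_le_eq abs_minus_commute)
qed

lemma norm0hol_nonneg:
  assumes "v \<in> C0hol \<gamma> h" "0 < h"
  shows "0 \<le> norm0hol \<gamma> h v"
  using has_holder_constD[OF has_holder_const_norm0hol[OF assms(1)], of 0 h] assms(2)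
  by (smt (verit) powr_gt_zero zero_le_mult_iff)

lemma C0hol_vanI:
  assumes "0 < h" "0 < \<delta>" "v 0 = 0" "has_holder_const \<delta> h K v" "\<forall>t\<in>{0..h}. \<bar>v t\<bar> \<le> K"
  shows "v \<in> C0hol_van \<delta> h" "norm0hol \<delta> h v \<le> K"
proof -
  have quots: "q \<le> K" if "q \<in> holder_quots \<delta> h v" for q
  proof -
    from that obtain x y where xy: "0 \<le> x" "x < y" "y \<le> h" "q = \<bar>v x - v y\<bar> / (y - x) powr \<delta>"
      by (auto simp: holder_quots_def)
    with has_holder_constD[OF assms(4) xy(1-3)] show ?thesis
      by (simp add: divide_le_eq abs_minus_commute)
  qed
  show "v \<in> C0hol_van \<delta> h"
    using continuous_on_if_has_holder_const[OF assms(4,2)] quots assms(3)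
    by (auto simp: C0hol_van_def C0hol_def bdd_above_def)
  have "holder_quots \<delta> h v \<noteq> {}"
    using assms(1) by (auto simp: holder_quots_def)
  then have "holder_semi0 \<delta> h v \<le> K"
    unfolding holder_semi0_def using quots by (rule cSup_least)
  moreover have "(SUP t\<in>{0..h}. \<bar>v t\<bar>) \<le> K"
    using assms(1,5) by (intro cSUP_least) auto
  ultimately show "norm0hol \<delta> h v \<le> K"
    by (simp add: norm0hol_def)
qed

lemma powr_le_scaled_powr:
  fixes t A p q P :: real
  assumes "0 \<le> t" "t \<le> A" "1 \<le> A" "0 < q" "q \<le> p" "p \<le> P"
  shows "t powr p \<le> A powr P * t powr q"
proof (cases "t = 0")
  case False
  then have "t powr p = t powr (p - q) * t powr q"
    by (simp add: powr_add[symmetric])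
  also have "\<dots> \<le> A powr (p - q) * t powr q"
    using assms by (intro mult_right_mono powr_mono2) auto
  also have "\<dots> \<le> A powr P * t powr q"
    using assms by (intro mult_right_mono powr_mono) auto
  finally show ?thesis .
qed (use assms in simp)

lemma abs_powr_diff_le:
  fixes x y e :: real
  assumes "0 < x" "x < y" "y \<le> 2 * x"
  shows "\<bar>y powr e - x powr e\<bar> \<le> \<bar>e\<bar> * 2 powr (\<bar>e\<bar> + 1) * x powr (e - 1) * (y - x)"
proof -
  have "\<exists>z>x. z < y \<and> y powr e - x powr e = (y - x) * (e * z powr (e - 1))"
    by (rule MVT2[OF assms(2)]) (use assms(1) in \<open>auto intro: has_real_derivative_powr\<close>)
  then obtain z where z: "x < z" "z < y" "y powr e - x powr e = (y - x) * (e * z powr (e - 1))"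
    by blast
  have "z powr (e - 1) \<le> 2 powr (\<bar>e\<bar> + 1) * x powr (e - 1)"
  proof (cases "0 \<le> e - 1")
    case True
    have "z powr (e - 1) \<le> (2 * x) powr (e - 1)"
      using z assms True by (intro powr_mono2) auto
    also have "\<dots> = 2 powr (e - 1) * x powr (e - 1)"
      using assms by (simp add: powr_mult)
    also have "\<dots> \<le> 2 powr (\<bar>e\<bar> + 1) * x powr (e - 1)"
      by (intro mult_right_mono powr_mono) auto
    finally show ?thesis .
  next
    case False
    have "z powr (e - 1) \<le> x powr (e - 1)"
      using z assms False by (intro powr_mono2') auto
    also have "\<dots> \<le> 2 powr (\<bar>e\<bar> + 1) * x powr (e - 1)"
      by (simp add: ge_one_powr_ge_zero mult_le_cancel_right1)
    finally show ?thesis .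
  qed
  then have "\<bar>y powr e - x powr e\<bar> \<le> (y - x) * (\<bar>e\<bar> * (2 powr (\<bar>e\<bar> + 1) * x powr (e - 1)))"
    using z assms by (simp add: abs_mult mult_left_mono)
  then show ?thesis
    by (simp add: mult_ac)
qed

definition weight_const :: "real \<Rightarrow> real \<Rightarrow> real" where
  "weight_const A e = (\<bar>e\<bar> + 2) * 2 powr (\<bar>e\<bar> + 1) * (A powr (\<bar>e\<bar> + 1))\<^sup>2"

lemma weight_const_nonneg: "0 \<le> weight_const A e"
  by (simp add: weight_const_def)

context
  fixes g :: "real \<Rightarrow> real" and A G h \<beta> \<delta> e :: real
  assumes g0: "g 0 = 0" and g_holder: "has_holder_const \<beta> h G g"
    and h: "0 < h" "h \<le> A" "1 \<le> A"
    and \<beta>: "0 < \<beta>" "\<beta> \<le> 1" and e: "-1 < e"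
    and \<delta>: "0 < \<delta>" "\<delta> \<le> \<beta>" "\<delta> \<le> e + \<beta>"
    and G: "0 \<le> G"
begin

private abbreviation "Z \<equiv> A powr (\<bar>e\<bar> + 1)"
private abbreviation "T \<equiv> (2::real) powr (\<bar>e\<bar> + 1)"

private lemma Z_ge_1: "1 \<le> Z" and T_ge_1: "1 \<le> T"
  using h by (simp_all add: ge_one_powr_ge_zero)

private lemma scale_to_delta: "0 < d \<Longrightarrow> d \<le> A \<Longrightarrow> \<delta> \<le> p \<Longrightarrow> p \<le> \<bar>e\<bar> + 1 \<Longrightarrow> d powr p \<le> Z * d powr \<delta>"
  using h \<delta> by (intro powr_le_scaled_powr) auto

lemma weighted_abs_le:
  assumes "0 \<le> t" "t \<le> h"
  shows "\<bar>t powr e * g t\<bar> \<le> G * t powr (e + \<beta>)"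
proof (cases "t = 0")
  case False
  have "\<bar>g t\<bar> \<le> G * t powr \<beta>"
    using has_holder_constD[OF g_holder, of 0 t] g0 assms False by simp
  then have "t powr e * \<bar>g t\<bar> \<le> t powr e * (G * t powr \<beta>)"
    by (intro mult_left_mono) auto
  then show ?thesis
    by (simp add: abs_mult powr_add mult_ac)
qed (simp add: g0)

private lemma weight_const_bounds:
  "Z \<le> weight_const A e" "(T + 1) * Z \<le> weight_const A e"
  "Z * Z + \<bar>e\<bar> * T * (Z * Z) \<le> weight_const A e"
proof -
  define W where "W = T * (Z * Z)"
  have "Z \<le> Z * Z" "Z * Z \<le> W" "T * Z \<le> W" "0 \<le> \<bar>e\<bar> * W"
    using Z_ge_1 T_ge_1 by (simp_all add: W_def mult_le_cancel_right1 mult_le_cancel_left1)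
  moreover have "weight_const A e = \<bar>e\<bar> * W + 2 * W"
    by (simp add: weight_const_def W_def power2_eq_square algebra_simps)
  moreover have "(T + 1) * Z = T * Z + Z" "\<bar>e\<bar> * T * (Z * Z) = \<bar>e\<bar> * W"
    by (simp_all add: W_def distrib_right mult.assoc)
  ultimately show "Z \<le> weight_const A e" "(T + 1) * Z \<le> weight_const A e"
    "Z * Z + \<bar>e\<bar> * T * (Z * Z) \<le> weight_const A e"
    using Z_ge_1 by linarith+
qed

lemma weighted_sup_bound:
  assumes "0 \<le> t" "t \<le> h"
  shows "\<bar>t powr e * g t\<bar> \<le> weight_const A e * G"
proof -
  have "t powr (e + \<beta>) \<le> A powr (e + \<beta>)"
    using assms h \<delta> by (intro powr_mono2) auto
  also have "\<dots> \<le> Z"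
    using h \<beta> by (intro powr_mono) auto
  also have "\<dots> \<le> weight_const A e"
    by (rule weight_const_bounds)
  finally have "G * t powr (e + \<beta>) \<le> weight_const A e * G"
    using G by (simp add: mult_left_mono mult.commute)
  with weighted_abs_le[OF assms] show ?thesis
    by linarith
qed

lemma weighted_diff_far:
  assumes "0 \<le> x" "x < y" "y \<le> h" "2 * x < y"
  shows "\<bar>y powr e * g y - x powr e * g x\<bar> \<le> weight_const A e * G * (y - x) powr \<delta>"
proof -
  define d where "d = y - x"
  define s where "s = e + \<beta>"
  have d: "0 < d" "d \<le> A" "x \<le> d" "y \<le> 2 * d"
    using assms h by (auto simp: d_def)
  have s: "\<delta> \<le> s" "s \<le> \<bar>e\<bar> + 1" "0 < s"
    using \<delta> \<beta> by (auto simp: s_def)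
  have "y powr s \<le> (2 * d) powr s"
    using d assms s by (intro powr_mono2) auto
  also have "\<dots> = 2 powr s * d powr s"
    using d by (simp add: powr_mult)
  also have "\<dots> \<le> T * d powr s"
    using s by (intro mult_right_mono powr_mono) auto
  finally have "G * y powr s \<le> G * (T * d powr s)"
    using G by (rule mult_left_mono)
  then have y: "\<bar>y powr e * g y\<bar> \<le> T * G * d powr s"
    using weighted_abs_le[of y] assms by (simp add: s_def mult_ac)
  have "x powr s \<le> d powr s"
    using d assms s by (intro powr_mono2) auto
  then have "G * x powr s \<le> G * d powr s"
    using G by (rule mult_left_mono)
  then have x: "\<bar>x powr e * g x\<bar> \<le> G * d powr s"
    using weighted_abs_le[of x] assms by (simp add: s_def)
  have "\<bar>y powr e * g y - x powr e * g x\<bar> \<le> (T + 1) * G * d powr s"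
    using x y abs_triangle_ineq4[of "y powr e * g y" "x powr e * g x"] by (simp add: algebra_simps)
  also have "\<dots> \<le> (T + 1) * G * (Z * d powr \<delta>)"
    using scale_to_delta[OF d(1,2) s(1,2)] G T_ge_1 by (intro mult_left_mono) auto
  also have "\<dots> = ((T + 1) * Z) * G * d powr \<delta>"
    by (simp add: mult_ac)
  also have "\<dots> \<le> weight_const A e * G * d powr \<delta>"
    using weight_const_bounds(2) G by (intro mult_right_mono) auto
  finally show ?thesis
    by (simp add: d_def)
qed

private lemma near_first_factor:
  assumes "0 < d" "d \<le> x" "x < y" "y \<le> h"
  shows "y powr e * d powr \<beta> \<le> Z * Z * d powr \<delta>"
proof (cases "0 \<le> e")
  case True
  have "y powr e \<le> A powr e"
    using assms h True by (intro powr_mono2) auto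
  also have "\<dots> \<le> Z"
    using h by (intro powr_mono) auto
  finally have "y powr e \<le> Z" .
  moreover have "d powr \<beta> \<le> Z * d powr \<delta>"
    using assms h \<beta> \<delta> by (intro scale_to_delta) auto
  ultimately have "y powr e * d powr \<beta> \<le> Z * (Z * d powr \<delta>)"
    using Z_ge_1 by (intro mult_mono) auto
  then show ?thesis
    by (simp add: mult.assoc)
next
  case False
  have "y powr e \<le> x powr e"
    using assms False by (intro powr_mono2') auto
  also have "\<dots> \<le> d powr e"
    using assms False by (intro powr_mono2') auto
  finally have "y powr e * d powr \<beta> \<le> d powr (e + \<beta>)"
    by (simp add: powr_add mult_right_mono)
  also have "\<dots> \<le> Z * d powr \<delta>"
    using assms h \<beta> \<delta> by (intro scale_to_delta) auto
  also have "\<dots> \<le> Z * Z * d powr \<delta>"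
    using Z_ge_1 by (intro mult_right_mono) (auto simp: mult_le_cancel_left1)
  finally show ?thesis .
qed

private lemma near_second_factor:
  assumes "0 < d" "d \<le> x" "x \<le> h"
  shows "x powr (e - 1 + \<beta>) * d \<le> Z * Z * d powr \<delta>"
proof (cases "e - 1 + \<beta> \<le> 0")
  case True
  have "x powr (e - 1 + \<beta>) \<le> d powr (e - 1 + \<beta>)"
    using assms True by (intro powr_mono2') auto
  then have "x powr (e - 1 + \<beta>) * d \<le> d powr (e - 1 + \<beta>) * d powr 1"
    using assms by (simp add: mult_right_mono)
  also have "\<dots> = d powr (e + \<beta>)"
    by (simp only: powr_add[symmetric]) simp
  also have "\<dots> \<le> Z * d powr \<delta>"
    using assms h \<beta> \<delta> by (intro scale_to_delta) auto
  also have "\<dots> \<le> Z * Z * d powr \<delta>"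
    using Z_ge_1 by (intro mult_right_mono) (auto simp: mult_le_cancel_left1)
  finally show ?thesis .
next
  case False
  have "x powr (e - 1 + \<beta>) \<le> A powr (e - 1 + \<beta>)"
    using assms h False by (intro powr_mono2) auto
  also have "\<dots> \<le> Z"
    using h \<beta> by (intro powr_mono) auto
  finally have "x powr (e - 1 + \<beta>) \<le> Z" .
  moreover have "d powr 1 \<le> Z * d powr \<delta>"
    using assms h \<beta> \<delta> by (intro scale_to_delta) auto
  ultimately have "x powr (e - 1 + \<beta>) * d \<le> Z * (Z * d powr \<delta>)"
    using assms Z_ge_1 by (intro mult_mono) auto
  then show ?thesis
    by (simp add: mult.assoc)
qed

lemma weighted_diff_near:
  assumes "0 < x" "x < y" "y \<le> h" "y \<le> 2 * x"
  shows "\<bar>y powr e * g y - x powr e * g x\<bar> \<le> weight_const A e * G * (y - x) powr \<delta>"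
proof -
  define d where "d = y - x"
  have d: "0 < d" "d \<le> x"
    using assms by (auto simp: d_def)
  have "\<bar>y powr e * (g y - g x)\<bar> \<le> y powr e * (G * d powr \<beta>)"
    using has_holder_constD[OF g_holder, of x y] assms by (simp add: abs_mult d_def mult_left_mono)
  also have "\<dots> = G * (y powr e * d powr \<beta>)"
    by (simp add: mult_ac)
  also have "\<dots> \<le> G * (Z * Z * d powr \<delta>)"
    using near_first_factor[OF d assms(2,3)] G by (rule mult_left_mono)
  finally have first: "\<bar>y powr e * (g y - g x)\<bar> \<le> Z * Z * G * d powr \<delta>"
    by (simp add: mult_ac)
  have "\<bar>(y powr e - x powr e) * g x\<bar> \<le> (\<bar>e\<bar> * T * x powr (e - 1) * d) * (G * x powr \<beta>)"
    unfolding abs_mult using abs_powr_diff_le[OF assms(1,2,4), of e]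
      has_holder_constD[OF g_holder, of 0 x] g0 assms
    by (intro mult_mono) (auto simp: d_def)
  also have "\<dots> = \<bar>e\<bar> * T * G * (x powr (e - 1 + \<beta>) * d)"
    by (simp add: powr_add mult_ac)
  also have "\<dots> \<le> \<bar>e\<bar> * T * G * (Z * Z * d powr \<delta>)"
    using near_second_factor[OF d] assms G by (intro mult_left_mono) auto
  finally have second: "\<bar>(y powr e - x powr e) * g x\<bar> \<le> \<bar>e\<bar> * T * (Z * Z) * G * d powr \<delta>"
    by (simp add: mult_ac)
  have "y powr e * g y - x powr e * g x = y powr e * (g y - g x) + (y powr e - x powr e) * g x"
    by (simp add: algebra_simps)
  then have "\<bar>y powr e * g y - x powr e * g x\<bar> \<le> (Z * Z + \<bar>e\<bar> * T * (Z * Z)) * G * d powr \<delta>"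
    using first second abs_triangle_ineq[of "y powr e * (g y - g x)" "(y powr e - x powr e) * g x"]
    by (simp add: algebra_simps)
  also have "\<dots> \<le> weight_const A e * G * d powr \<delta>"
    using weight_const_bounds(3) G by (intro mult_right_mono) auto
  finally show ?thesis
    by (simp add: d_def)
qed

lemma weighted_has_holder_const:
  "has_holder_const \<delta> h (weight_const A e * G) (\<lambda>t. t powr e * g t)"
  unfolding has_holder_const_def
proof (intro allI impI)
  fix x y :: real assume "0 \<le> x" "x < y" "y \<le> h"
  then show "\<bar>y powr e * g y - x powr e * g x\<bar> \<le> weight_const A e * G * (y - x) powr \<delta>"
    by (cases "2 * x < y") (auto intro: weighted_diff_far weighted_diff_near)
qed

end

lemma abs_sum_mult_le:
  fixes w u k :: "'i \<Rightarrow> real"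
  assumes "\<forall>i\<in>I. \<bar>u i\<bar> \<le> k i"
  shows "\<bar>\<Sum>i\<in>I. w i * u i\<bar> \<le> (\<Sum>i\<in>I. \<bar>w i\<bar> * k i)"
proof -
  have "\<bar>\<Sum>i\<in>I. w i * u i\<bar> \<le> (\<Sum>i\<in>I. \<bar>w i\<bar> * \<bar>u i\<bar>)"
    using sum_abs[of "\<lambda>i. w i * u i" I] by (simp add: abs_mult)
  also have "\<dots> \<le> (\<Sum>i\<in>I. \<bar>w i\<bar> * k i)"
    using assms by (intro sum_mono mult_left_mono) auto
  finally show ?thesis .
qed

lemma powr_weighted_sum_C0hol_van:
  fixes g b :: "real \<Rightarrow> real" and \<Gamma> :: "real set"
  assumes "0 < \<alpha>" "\<forall>\<gamma>\<in>\<Gamma>. \<alpha> \<le> \<gamma>" "0 < h" "h \<le> A" "1 \<le> A"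
    and "0 < \<beta>" "\<beta> \<le> 1" "0 < \<delta>" "\<delta> \<le> \<beta>" "\<delta> \<le> \<beta> + \<alpha> - 1"
    and "g \<in> C0hol_van \<beta> h"
  defines "w \<equiv> \<lambda>x. \<Sum>\<gamma>\<in>\<Gamma>. b \<gamma> * (x powr (\<gamma> - 1) * g x)"
  shows "w \<in> C0hol_van \<delta> h"
    and "norm0hol \<delta> h w \<le> (\<Sum>\<gamma>\<in>\<Gamma>. \<bar>b \<gamma>\<bar> * weight_const A (\<gamma> - 1)) * norm0hol \<beta> h g"
proof -
  define G where "G = norm0hol \<beta> h g"
  define K where "K = (\<Sum>\<gamma>\<in>\<Gamma>. \<bar>b \<gamma>\<bar> * weight_const A (\<gamma> - 1)) * G"
  have g: "g \<in> C0hol \<beta> h" "g 0 = 0"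
    using assms(11) by (simp_all add: C0hol_van_def)
  have G: "0 \<le> G" and g_holder: "has_holder_const \<beta> h G g"
    using norm0hol_nonneg[OF g(1) assms(3)] has_holder_const_norm0hol[OF g(1)] by (simp_all add: G_def)
  have summand: "has_holder_const \<delta> h (weight_const A (\<gamma> - 1) * G) (\<lambda>t. t powr (\<gamma> - 1) * g t)"
    "\<forall>t\<in>{0..h}. \<bar>t powr (\<gamma> - 1) * g t\<bar> \<le> weight_const A (\<gamma> - 1) * G"
    if "\<gamma> \<in> \<Gamma>" for \<gamma>
    using weighted_has_holder_const[OF g(2) g_holder _ _ _ _ _ _ assms(8,9) _ G]
      weighted_sup_bound[OF g(2) g_holder _ _ _ _ _ _ assms(8,9) _ G] assms(1-7,10) that
    by (fastforce simp: algebra_simps)+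
  have "has_holder_const \<delta> h K w"
    unfolding has_holder_const_def
  proof (intro allI impI)
    fix x y :: real assume "0 \<le> x" "x < y" "y \<le> h"
    then have "\<bar>w y - w x\<bar> \<le> (\<Sum>\<gamma>\<in>\<Gamma>. \<bar>b \<gamma>\<bar> * (weight_const A (\<gamma> - 1) * G * (y - x) powr \<delta>))"
      using summand(1) unfolding w_def sum_subtractf[symmetric] right_diff_distrib[symmetric]
      by (intro abs_sum_mult_le) (auto simp: has_holder_const_def)
    then show "\<bar>w y - w x\<bar> \<le> K * (y - x) powr \<delta>"
      by (simp add: K_def sum_distrib_right mult.assoc)
  qed
  moreover have "\<forall>t\<in>{0..h}. \<bar>w t\<bar> \<le> K"
  proof
    fix t assume "t \<in> {0..h}"
    then have "\<bar>w t\<bar> \<le> (\<Sum>\<gamma>\<in>\<Gamma>. \<bar>b \<gamma>\<bar> * (weight_const A (\<gamma> - 1) * G))"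
      using summand(2) unfolding w_def by (intro abs_sum_mult_le) auto
    then show "\<bar>w t\<bar> \<le> K"
      by (simp add: K_def sum_distrib_right mult.assoc)
  qed
  moreover have "w 0 = 0"
    using g(2) by (simp add: w_def)
  ultimately show "w \<in> C0hol_van \<delta> h" "norm0hol \<delta> h w \<le> (\<Sum>\<gamma>\<in>\<Gamma>. \<bar>b \<gamma>\<bar> * weight_const A (\<gamma> - 1)) * norm0hol \<beta> h g"
    using C0hol_vanI[OF assms(3,8)] by (simp_all add: K_def G_def)
qed

lemma Gams_weighted_C0hol_van:
  fixes c g :: "real \<Rightarrow> real"
  assumes "0 < \<alpha>" "\<alpha> \<le> 1" "0 < h" "h \<le> A" "1 \<le> A"
    and "real l * \<alpha> \<le> 1" "1 < real (l + 1) * \<alpha>" "g \<in> C0hol_van (real l * \<alpha>) h"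
    and "\<forall>\<gamma>\<in>Gams n \<alpha>. \<bar>c \<gamma>\<bar> \<le> K" "(\<Sum>\<gamma>\<in>Gams n \<alpha>. \<gamma> * K * weight_const A (\<gamma> - 1)) \<le> C"
  defines "w \<equiv> \<lambda>x. if x = 0 then 0 else (\<Sum>\<gamma>\<in>Gams n \<alpha>. \<gamma> * c \<gamma> * x powr (\<gamma> - 1)) * g x"
  shows "w \<in> C0hol_van (real (l + 1) * \<alpha> - 1) h"
    and "norm0hol (real (l + 1) * \<alpha> - 1) h w \<le> C * norm0hol (real l * \<alpha>) h g"
proof -
  have g0: "g 0 = 0"
    using assms(8) by (simp add: C0hol_van_def)
  \<comment> \<open>as g 0 = 0 and 0 powr p = 0, the case distinction at 0 is immaterial\<close>
  have w: "w = (\<lambda>x. \<Sum>\<gamma>\<in>Gams n \<alpha>. \<gamma> * c \<gamma> * (x powr (\<gamma> - 1) * g x))"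
    using g0 by (auto simp: w_def sum_distrib_right mult.assoc)
  have exponents: "0 < real l * \<alpha>" "real l * \<alpha> \<le> 1" "0 < real (l + 1) * \<alpha> - 1"
    "real (l + 1) * \<alpha> - 1 \<le> real l * \<alpha>" "real (l + 1) * \<alpha> - 1 \<le> real l * \<alpha> + \<alpha> - 1"
    using assms(1,2,6,7) by (auto simp: algebra_simps intro!: mult_pos_pos)
  have "\<forall>\<gamma>\<in>Gams n \<alpha>. \<alpha> \<le> \<gamma>"
    using Gams_bounds(1) assms(1,2) by blast
  note weighted_sum = powr_weighted_sum_C0hol_van[OF assms(1) this assms(3-5) exponents assms(8),
      where b="\<lambda>\<gamma>. \<gamma> * c \<gamma>", folded w]
  show "w \<in> C0hol_van (real (l + 1) * \<alpha> - 1) h"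
    by (rule weighted_sum(1))
  have "\<bar>\<gamma> * c \<gamma>\<bar> \<le> \<gamma> * K" if "\<gamma> \<in> Gams n \<alpha>" for \<gamma>
    using assms(9) that \<open>\<forall>\<gamma>\<in>Gams n \<alpha>. \<alpha> \<le> \<gamma>\<close> assms(1) by (auto simp: abs_mult intro!: mult_left_mono)
  then have "(\<Sum>\<gamma>\<in>Gams n \<alpha>. \<bar>\<gamma> * c \<gamma>\<bar> * weight_const A (\<gamma> - 1))
      \<le> (\<Sum>\<gamma>\<in>Gams n \<alpha>. \<gamma> * K * weight_const A (\<gamma> - 1))"
    by (intro sum_mono mult_right_mono weight_const_nonneg)
  with assms(10) have "(\<Sum>\<gamma>\<in>Gams n \<alpha>. \<bar>\<gamma> * c \<gamma>\<bar> * weight_const A (\<gamma> - 1)) \<le> C"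
    by linarith
  moreover have "0 \<le> norm0hol (real l * \<alpha>) h g"
    using assms(3,8) by (intro norm0hol_nonneg) (auto simp: C0hol_van_def)
  ultimately show "norm0hol (real (l + 1) * \<alpha> - 1) h w \<le> C * norm0hol (real l * \<alpha>) h g"
    using weighted_sum(2) mult_right_mono by fastforce
qed

theorem lemmaA2:
  fixes a \<alpha> M :: real and n :: nat
  assumes "0 < a" "0 < \<alpha>" "\<alpha> < 1" "0 < M" "0 < n"
  shows "\<exists>C>0. \<forall>b c0 f D c h (l::nat) g.
    0 < b \<and> Cn_partials n a b c0 f D \<and>
    (\<forall>\<beta>. set \<beta> \<subseteq> {1,2} \<and> length \<beta> \<le> n \<longrightarrow> (\<forall>z\<in>{0..a} \<times> {c0-b..c0+b}. \<bar>D \<beta> z\<bar> \<le> M)) \<and>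
    coeffs_cond n \<alpha> a c0 D c \<and>
    0 < h \<and> h \<le> a \<and> 0 < l \<and> real l * \<alpha> \<le> 1 \<and> 1 < real (l + 1) * \<alpha> \<and>
    g \<in> C0hol_van (real l * \<alpha>) h
    \<longrightarrow> (let w = (\<lambda>x. if x = 0 then 0 else (\<Sum>\<gamma>\<in>Gams n \<alpha>. \<gamma> * c \<gamma> * x powr (\<gamma> - 1)) * g x)
         in w \<in> C0hol_van (real (l + 1) * \<alpha> - 1) h \<and>
            norm0hol (real (l + 1) * \<alpha> - 1) h w \<le> C * norm0hol (real l * \<alpha>) h g)"
proof -
  have "\<alpha> \<le> 1"
    using assms(3) by simp
  obtain K where "0 \<le> K" and K: "\<And>c0 D c \<gamma>. coeffs_cond n \<alpha> a c0 D c
      \<Longrightarrow> \<forall>s<n. \<forall>\<beta>\<in>Lam s. \<bar>D \<beta> (0, c0)\<bar> \<le> M \<Longrightarrow> \<gamma> \<in> Gams n \<alpha> \<Longrightarrow> \<bar>c \<gamma>\<bar> \<le> K"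
    using coeffs_cond_coeffs_bounded[OF assms(2) \<open>\<alpha> \<le> 1\<close> assms(1)] by blast
  define S where "S = (\<Sum>\<gamma>\<in>Gams n \<alpha>. \<gamma> * K * weight_const (max 1 a) (\<gamma> - 1))"
  have "0 \<le> S"
    using Gams_bounds(1) assms(2) \<open>\<alpha> \<le> 1\<close> \<open>0 \<le> K\<close> unfolding S_def
    by (intro sum_nonneg mult_nonneg_nonneg weight_const_nonneg) force+
  show ?thesis
  proof (intro exI[of _ "1 + S"] conjI allI impI)
    fix b c0 f D c h l g
    assume H: "0 < b \<and> Cn_partials n a b c0 f D \<and>
      (\<forall>\<beta>. set \<beta> \<subseteq> {1,2} \<and> length \<beta> \<le> n \<longrightarrow> (\<forall>z\<in>{0..a} \<times> {c0-b..c0+b}. \<bar>D \<beta> z\<bar> \<le> M)) \<and>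
      coeffs_cond n \<alpha> a c0 D c \<and>
      0 < h \<and> h \<le> a \<and> 0 < l \<and> real l * \<alpha> \<le> 1 \<and> 1 < real (l + 1) * \<alpha> \<and>
      g \<in> C0hol_van (real l * \<alpha>) h"
    then have "\<forall>s<n. \<forall>\<beta>\<in>Lam s. \<bar>D \<beta> (0, c0)\<bar> \<le> M"
      using assms(1) by (auto simp: Lam_def)
    with K H have "\<forall>\<gamma>\<in>Gams n \<alpha>. \<bar>c \<gamma>\<bar> \<le> K"
      by blast
    with H \<open>\<alpha> \<le> 1\<close> show "let w = (\<lambda>x. if x = 0 then 0 else (\<Sum>\<gamma>\<in>Gams n \<alpha>. \<gamma> * c \<gamma> * x powr (\<gamma> - 1)) * g x)
         in w \<in> C0hol_van (real (l + 1) * \<alpha> - 1) h \<and>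
            norm0hol (real (l + 1) * \<alpha> - 1) h w \<le> (1 + S) * norm0hol (real l * \<alpha>) h g"
      unfolding Let_def S_def
      by (intro conjI Gams_weighted_C0hol_van[where A="max 1 a"] assms(2)) auto
  qed (use \<open>0 \<le> S\<close> in simp)
qed

end
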